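(* Let $G$ be a graph and $(A,B)$ a $2$-separation of $G$ with $A\cap B=\{x,y\}$. Let $X=\{a,b,c,d\}\subseteq V(G)$. If $x,y\in X$, one vertex of $X$ lies in $A\setminus\{x,y\}$ and the other lies in $B\setminus\{x,y\}$, then $G$ does not have an $L(X)$-minor.
   Context: A $2$-separation is a pair $(A,B)$ with $A\cup B=V(G)$, $|A\cap B|\le2$ and no edge between $A\setminus B$ and $B\setminus A$. The graph $L$ has vertices $v_1,\dots,v_8$ and edges $v_1v_2,v_1v_5,v_2v_7,v_2v_8,v_2v_3,v_3v_4,v_4v_5,v_4v_7,v_5v_6,v_6v_7,v_6v_8,v_7v_8$. An $L$-model in $G$ is a family $\{G_z:z\in V(L)\}$ of pairwise vertex-disjoint connected subgraphs of $G$ such that for each $zz'\in E(L)$ some vertex of $G_z$ is adjacent to some vertex of $G_{z'}$. $G$ has an $L(X)$-minor if there is an $L$-model and an injective map $\pi:X\to\{v_1,v_3,v_4,v_5\}$ with $u\in V(G_{\pi(u)})$ for all $u\in X$. *)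

theory Defs
  imports Main
begin

definition graph :: "'a set \<Rightarrow> ('a \<times> 'a) set \<Rightarrow> bool" where
  "graph V E \<longleftrightarrow> finite V \<and> E \<subseteq> V \<times> V \<and> sym E \<and> (\<forall>v. (v, v) \<notin> E)"

definition two_separation :: "'a set \<Rightarrow> ('a \<times> 'a) set \<Rightarrow> 'a set \<Rightarrow> 'a set \<Rightarrow> bool" where
  "two_separation V E A B \<longleftrightarrow> A \<union> B = V \<and> card (A \<inter> B) \<le> 2 \<and>
     (\<forall>u v. u \<in> A - B \<longrightarrow> v \<in> B - A \<longrightarrow> (u, v) \<notin> E)"

definition connected_subgraph :: "'a set \<Rightarrow> ('a \<times> 'a) set \<Rightarrow> 'a set \<Rightarrow> ('a \<times> 'a) set \<Rightarrow> bool" where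
  "connected_subgraph V E W F \<longleftrightarrow> W \<subseteq> V \<and> F \<subseteq> E \<and> F \<subseteq> W \<times> W \<and> sym F \<and> W \<noteq> {} \<and>
     (\<forall>u\<in>W. \<forall>v\<in>W. (u, v) \<in> F\<^sup>*)"

text \<open>The graph L on vertices 1..8 (vertex i stands for v_i).\<close>
definition L_vertices :: "nat set" where "L_vertices = {1..8}"

definition L_edges :: "(nat \<times> nat) set" where
  "L_edges = {(1,2),(1,5),(2,7),(2,8),(2,3),(3,4),(4,5),(4,7),(5,6),(6,7),(6,8),(7,8)}"

definition L_model :: "'a set \<Rightarrow> ('a \<times> 'a) set \<Rightarrow> (nat \<Rightarrow> 'a set) \<Rightarrow> (nat \<Rightarrow> ('a \<times> 'a) set) \<Rightarrow> bool" where
  "L_model V E W F \<longleftrightarrow>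
     (\<forall>z\<in>L_vertices. connected_subgraph V E (W z) (F z)) \<and>
     (\<forall>z\<in>L_vertices. \<forall>z'\<in>L_vertices. z \<noteq> z' \<longrightarrow> W z \<inter> W z' = {}) \<and>
     (\<forall>(z, z')\<in>L_edges. \<exists>u\<in>W z. \<exists>v\<in>W z'. (u, v) \<in> E)"

definition has_L_minor_rooted :: "'a set \<Rightarrow> ('a \<times> 'a) set \<Rightarrow> 'a set \<Rightarrow> bool" where
  "has_L_minor_rooted V E X \<longleftrightarrow>
     (\<exists>W F \<pi>. L_model V E W F \<and> \<pi> ` X \<subseteq> {1, 3, 4, 5} \<and> inj_on \<pi> X \<and>
        (\<forall>u\<in>X. u \<in> W (\<pi> u)))"

end

theory Submission
  imports Defs
begin

text \<open>Every branch set of an \<open>L\<close>-model other than the two containing \<open>x\<close> and \<open>y\<close> avoids the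
separator \<open>{x, y}\<close>, so being connected it lies entirely in \<open>A - B\<close> or entirely in \<open>B - A\<close>;
adjacent such branch sets lie on the same side. Deleting any two of the roots
\<open>v\<^sub>1, v\<^sub>3, v\<^sub>4, v\<^sub>5\<close> from \<open>L\<close> leaves the other two roots in one component, so their branch sets
lie on the same side, whereas one of them contains the vertex of \<open>X\<close> in \<open>A - B\<close> and the
other the vertex of \<open>X\<close> in \<open>B - A\<close>.\<close>

definition separation :: "'a set \<Rightarrow> ('a \<times> 'a) set \<Rightarrow> 'a set \<Rightarrow> 'a set \<Rightarrow> bool" where
  "separation V E A B \<longleftrightarrow> A \<union> B = V \<and> (\<forall>u v. u \<in> A - B \<longrightarrow> v \<in> B - A \<longrightarrow> (u, v) \<notin> E)"

lemma two_separation_imp_separation: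
  "two_separation V E A B \<Longrightarrow> separation V E A B"
  unfolding two_separation_def separation_def by blast

lemma separation_sym:
  assumes "sym E" and "separation V E A B"
  shows "separation V E B A"
  using assms unfolding separation_def by (auto dest: symD)

lemma connected_subgraph_stays_in_side:
  assumes sep: "separation V E A B" and conn: "connected_subgraph V E S F"
    and avoid: "S \<inter> (A \<inter> B) = {}" and u: "u \<in> S" "u \<in> A - B"
  shows "S \<subseteq> A - B"
proof
  fix v assume "v \<in> S"
  have F: "F \<subseteq> E" "F \<subseteq> S \<times> S" "S \<subseteq> V"
    using conn unfolding connected_subgraph_def by auto
  have "(u, v) \<in> F\<^sup>*"
    using conn u \<open>v \<in> S\<close> unfolding connected_subgraph_def by blast
  then show "v \<in> A - B"
  proof (induction rule: rtrancl_induct)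
    case base
    then show ?case using u by simp
  next
    case (step w z)
    have "z \<in> A - B \<or> z \<in> B - A"
      using step.hyps(2) F avoid sep unfolding separation_def by auto
    then show ?case
      using step sep F unfolding separation_def by auto
  qed
qed

lemma connected_subgraph_one_side:
  assumes "sym E" and sep: "separation V E A B" and conn: "connected_subgraph V E S F"
    and avoid: "S \<inter> (A \<inter> B) = {}"
  shows "S \<subseteq> A - B \<or> S \<subseteq> B - A"
proof -
  obtain u where u: "u \<in> S" "u \<in> V"
    using conn unfolding connected_subgraph_def by auto
  then have "u \<in> A - B \<or> u \<in> B - A"
    using sep avoid unfolding separation_def by auto
  moreover have "S \<inter> (B \<inter> A) = {}"
    using avoid by auto
  ultimately show ?thesis
    using connected_subgraph_stays_in_side[OF sep conn avoid u(1)]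
      connected_subgraph_stays_in_side[OF separation_sym[OF \<open>sym E\<close> sep] conn _ u(1)]
    by blast
qed

text \<open>Connectedness of \<open>L - {i, j}\<close>, phrased via functions constant along its edges: the
non-roots \<open>v\<^sub>2, v\<^sub>6, v\<^sub>7, v\<^sub>8\<close> induce a connected subgraph to which every root is adjacent.\<close>

lemma L_delete_two_roots_connected:
  fixes s :: "nat \<Rightarrow> 'b"
  assumes ij: "i \<in> {1, 3, 4, 5}" "j \<in> {1, 3, 4, 5}"
    and inv: "\<And>z z'. (z, z') \<in> L_edges \<Longrightarrow> z \<notin> {i, j} \<Longrightarrow> z' \<notin> {i, j} \<Longrightarrow> s z = s z'"
    and t: "t \<in> {1, 3, 4, 5}" "t \<notin> {i, j}"
  shows "s t = s 2"
proof -
  have nonroot_edge: "s z = s z'"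
    if "(z, z') \<in> L_edges" "z \<notin> {1, 3, 4, 5}" "z' \<notin> {1, 3, 4, 5}" for z z'
    using inv that ij by blast
  have s27: "s 2 = s 7" and s78: "s 7 = s 8" and s68: "s 6 = s 8"
    by (rule nonroot_edge; simp add: L_edges_def)+
  have "(t, 2) \<in> L_edges \<or> (2, t) \<in> L_edges \<or> (t, 7) \<in> L_edges \<or> (t, 6) \<in> L_edges"
    using t(1) by (auto simp: L_edges_def)
  moreover have "2 \<notin> {i, j}" "6 \<notin> {i, j}" "7 \<notin> {i, j}"
    using ij by auto
  ultimately show ?thesis
    using inv[of t] inv[of _ t] t(2) s27 s78 s68 by metis
qed

lemma L_model_branch_set_one_side:
  assumes "sym E" and sep: "separation V E A B" and model: "L_model V E W F"
    and ij: "i \<in> L_vertices" "j \<in> L_vertices" and separator: "A \<inter> B \<subseteq> W i \<union> W j"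
    and z: "z \<in> L_vertices" "z \<notin> {i, j}"
  shows "W z \<subseteq> A - B \<or> W z \<subseteq> B - A"
proof (rule connected_subgraph_one_side[OF \<open>sym E\<close> sep])
  show "connected_subgraph V E (W z) (F z)"
    using model z(1) unfolding L_model_def by blast
  have "W z \<inter> W i = {}" "W z \<inter> W j = {}"
    using model ij z unfolding L_model_def by auto
  then show "W z \<inter> (A \<inter> B) = {}"
    using separator by blast
qed

lemma L_model_roots_same_side:
  assumes "sym E" and sep: "separation V E A B" and model: "L_model V E W F"
    and ij: "i \<in> {1, 3, 4, 5}" "j \<in> {1, 3, 4, 5}" and separator: "A \<inter> B \<subseteq> W i \<union> W j"
    and kl: "k \<in> {1, 3, 4, 5} - {i, j}" "l \<in> {1, 3, 4, 5} - {i, j}"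
  shows "W k \<subseteq> A - B \<longleftrightarrow> W l \<subseteq> A - B"
proof -
  have ij_vertices: "i \<in> L_vertices" "j \<in> L_vertices"
    using ij unfolding L_vertices_def by auto
  note one_side = L_model_branch_set_one_side[OF \<open>sym E\<close> sep model ij_vertices separator]
  have same_side: "W z \<subseteq> A - B \<longleftrightarrow> W z' \<subseteq> A - B"
    if edge: "(z, z') \<in> L_edges" and avoid: "z \<notin> {i, j}" "z' \<notin> {i, j}" for z z'
  proof -
    obtain u v where uv: "u \<in> W z" "v \<in> W z'" "(u, v) \<in> E"
      using model edge unfolding L_model_def by blast
    have "z \<in> L_vertices" "z' \<in> L_vertices"
      using edge unfolding L_edges_def L_vertices_def by auto
    with avoid have "W z \<subseteq> A - B \<or> W z \<subseteq> B - A" "W z' \<subseteq> A - B \<or> W z' \<subseteq> B - A"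
      using one_side by auto
    moreover have "(v, u) \<in> E"
      using \<open>sym E\<close> uv(3) by (rule symD)
    ultimately show ?thesis
      using uv sep unfolding separation_def by blast
  qed
  note connected = L_delete_two_roots_connected[where s = "\<lambda>z. W z \<subseteq> A - B", OF ij same_side]
  show ?thesis
    using connected[of k] connected[of l] kl by simp
qed

theorem mainTheorem19:
  fixes V :: "'a set" and E :: "('a \<times> 'a) set" and A B :: "'a set"
    and x y a b c d :: 'a and X :: "'a set"
  assumes "graph V E"
    and "two_separation V E A B" and "A \<inter> B = {x, y}"
    and "X = {a, b, c, d}" and "distinct [a, b, c, d]" and "X \<subseteq> V"
    and "x \<in> X" and "y \<in> X"
    and "\<exists>p q. X - {x, y} = {p, q} \<and> p \<in> A - {x, y} \<and> q \<in> B - {x, y}"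
  shows "\<not> has_L_minor_rooted V E X"
proof
  assume "has_L_minor_rooted V E X"
  then obtain W F \<pi> where model: "L_model V E W F" and roots: "\<pi> ` X \<subseteq> {1, 3, 4, 5}"
    and inj: "inj_on \<pi> X" and rooted: "\<forall>u\<in>X. u \<in> W (\<pi> u)"
    unfolding has_L_minor_rooted_def by blast
  obtain p q where pq: "X - {x, y} = {p, q}" "p \<in> A - {x, y}" "q \<in> B - {x, y}"
    using assms(9) by blast
  have sep: "separation V E A B"
    using assms(2) by (rule two_separation_imp_separation)
  have "sym E"
    using assms(1) unfolding graph_def by blast
  have "p \<in> X" "q \<in> X" "p \<notin> {x, y}" "q \<notin> {x, y}"
    using pq by auto
  then have kl: "\<pi> p \<in> {1, 3, 4, 5} - {\<pi> x, \<pi> y}" "\<pi> q \<in> {1, 3, 4, 5} - {\<pi> x, \<pi> y}"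
    using roots inj assms(7,8) by (auto simp: inj_on_eq_iff)
  have ij: "\<pi> x \<in> {1, 3, 4, 5}" "\<pi> y \<in> {1, 3, 4, 5}"
    using roots assms(7,8) by auto
  have separator: "A \<inter> B \<subseteq> W (\<pi> x) \<union> W (\<pi> y)"
    using rooted assms(3,7,8) by auto
  have same: "W (\<pi> p) \<subseteq> A - B \<longleftrightarrow> W (\<pi> q) \<subseteq> A - B"
    by (rule L_model_roots_same_side[OF \<open>sym E\<close> sep model ij separator kl])
  have roots_vertices: "{1, 3, 4, 5} \<subseteq> L_vertices"
    unfolding L_vertices_def by auto
  have "W (\<pi> p) \<subseteq> A - B \<or> W (\<pi> p) \<subseteq> B - A"
    using L_model_branch_set_one_side[OF \<open>sym E\<close> sep model _ _ separator] ij kl(1) roots_vertices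
    by blast
  moreover have "p \<in> W (\<pi> p)" "q \<in> W (\<pi> q)" "p \<in> A - B" "q \<in> B - A"
    using rooted pq assms(3) by auto
  ultimately show False
    using same by blast
qed

end
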